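(* Let $X_1\in\mathbb{R}^{n_1\times d}$ and $X_2\in\mathbb{R}^{n_2\times d}$ be two data matrices with $\|X_1\|,\|X_2\|\le 1$ and $\operatorname{rank}(X_m)<d$, and consider the two tasks fitted in the identity ordering ($\tau(1)=1$, $\tau(2)=2$). The following are equivalent: (1) For every choice of labels $y_1,y_2$ such that $S=\{(X_1,y_1),(X_2,y_2)\}\in\mathcal{S}_2$ (equivalently, for every minimum-norm solution $w^\star$), $F_{\tau,S}(2)=0$. (2) $X_1P_2P_1=0_{n_1\times d}$. (3) Every principal angle between $\mathrm{range}(X_1^\top)$ and $\mathrm{range}(X_2^\top)$ is either $0$ or $\pi/2$.
   Context: Let $d\ge 1$, $T\ge1$. A task is a pair $(X_m,y_m)$ with $X_m\in\mathbb{R}^{n_m\times d}$, $y_m\in\mathbb{R}^{n_m}$ and $\operatorname{rank}(X_m)<d$. $\mathcal{S}_T$ denotes the set of collections $S=\{(X_m,y_m)\}_{m=1}^T$ of $T$ tasks such that $\|X_m\|\le 1$ (spectral norm) for all $m$ and there exists $w\in\mathbb{R}^d$ with $\|w\|\le 1$ and $y_m=X_mw$ for all $m$. A task ordering is a map $\tau:\mathbb{N}^+\to\{1,\dots,T\}$. Given $S$ and $\tau$, the iterates are $w_0=0$ and $w_t=w_{t-1}+X_{\tau(t)}^+(y_{\tau(t)}-X_{\tau(t)}w_{t-1})$ for $t\ge1$, where $A^+$ is the Moore–Penrose pseudoinverse (equivalently, $w_t$ is the Euclidean projection of $w_{t-1}$ onto $\{w: X_{\tau(t)}w=y_{\tau(t)}\}$).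 The forgetting at iteration $k$ is $F_{\tau,S}(k)=\frac1k\sum_{t=1}^k\|X_{\tau(t)}w_k-y_{\tau(t)}\|^2$. $w^\star$ denotes the minimum Euclidean-norm vector with $X_mw^\star=y_m$ for all $m$. $P_m=I-X_m^+X_m$ is the orthogonal projection onto $\ker X_m$. Principal angles: for data matrices $X_1,X_2$ let $r=\min(\operatorname{rank}X_1,\operatorname{rank}X_2)$. The principal angles $0\le\theta_1\le\dots\le\theta_r\le\pi/2$ between $\mathrm{range}(X_1^\top)$ and $\mathrm{range}(X_2^\top)$ are defined recursively by $\cos\theta_i=|u_i^\top v_i|$, where $(u_i,v_i)$ maximizes $|u^\top v|$ over unit vectors $u\in\mathrm{range}(X_1^\top)$, $v\in\mathrm{range}(X_2^\top)$ with $u\perp u_j$, $v\perp v_j$ for all $j<i$. *)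

theory Defs
  imports "HOL-Analysis.Analysis"
begin

definition pinv :: "real^'d^'n \<Rightarrow> real^'n^'d" where
  "pinv A = (THE B. A ** B ** A = A \<and> B ** A ** B = B \<and>
                    transpose (A ** B) = A ** B \<and> transpose (B ** A) = B ** A)"

definition kerproj :: "real^'d^'n \<Rightarrow> real^'d^'d" where
  "kerproj X = mat 1 - pinv X ** X"

definition specnorm :: "real^'d^'n \<Rightarrow> real" where
  "specnorm X = onorm (\<lambda>x. X *v x)"

definition cl_step :: "real^'d^'n \<Rightarrow> real^'n \<Rightarrow> real^'d \<Rightarrow> real^'d" where
  "cl_step X y w = w + pinv X *v (y - X *v w)"

text \<open>Iterates w_0 = 0, w_1, w_2 for two tasks in the identity ordering tau(1)=1, tau(2)=2.\<close>
definition iter2 :: "real^'d^'n1 \<Rightarrow> real^'n1 \<Rightarrow> real^'d^'n2 \<Rightarrow> real^'n2 \<Rightarrow> real^'d" where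
  "iter2 X1 y1 X2 y2 = cl_step X2 y2 (cl_step X1 y1 0)"

definition forgetting2 :: "real^'d^'n1 \<Rightarrow> real^'n1 \<Rightarrow> real^'d^'n2 \<Rightarrow> real^'n2 \<Rightarrow> real" where
  "forgetting2 X1 y1 X2 y2 =
     (let w = iter2 X1 y1 X2 y2 in
      (1 / 2) * ((norm (X1 *v w - y1))\<^sup>2 + (norm (X2 *v w - y2))\<^sup>2))"

definition in_S2 :: "real^'d^'n1 \<Rightarrow> real^'n1 \<Rightarrow> real^'d^'n2 \<Rightarrow> real^'n2 \<Rightarrow> bool" where
  "in_S2 X1 y1 X2 y2 \<longleftrightarrow>
     specnorm X1 \<le> 1 \<and> specnorm X2 \<le> 1 \<and>
     (\<exists>w. norm w \<le> 1 \<and> y1 = X1 *v w \<and> y2 = X2 *v w)"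

definition rowspace :: "real^'d^'n \<Rightarrow> (real^'d) set" where
  "rowspace X = range (\<lambda>z. transpose X *v z)"

definition principal_vectors ::
  "(real^'d) set \<Rightarrow> (real^'d) set \<Rightarrow> nat \<Rightarrow> (nat \<Rightarrow> real^'d) \<Rightarrow> (nat \<Rightarrow> real^'d) \<Rightarrow> bool" where
  "principal_vectors U V r u v \<longleftrightarrow>
     (\<forall>i<r. u i \<in> U \<and> v i \<in> V \<and> norm (u i) = 1 \<and> norm (v i) = 1 \<and>
        (\<forall>j<i. u i \<bullet> u j = 0 \<and> v i \<bullet> v j = 0) \<and>
        (\<forall>x y. x \<in> U \<and> y \<in> V \<and> norm x = 1 \<and> norm y = 1 \<and>
               (\<forall>j<i. x \<bullet> u j = 0 \<and> y \<bullet> v j = 0) \<longrightarrow> \<bar>x \<bullet> y\<bar> \<le> \<bar>u i \<bullet> v i\<bar>))"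

definition principal_angles :: "real^'d^'n1 \<Rightarrow> real^'d^'n2 \<Rightarrow> real list" where
  "principal_angles X1 X2 =
     (let r = min (rank X1) (rank X2);
          uv = (SOME uv. principal_vectors (rowspace X1) (rowspace X2) r (fst uv) (snd uv))
      in map (\<lambda>i. arccos \<bar>fst uv i \<bullet> snd uv i\<bar>) [0..<r])"

end

theory Submission imports Defs begin

text \<open>With consistent labels \<open>y\<^sub>m = X\<^sub>m w\<close> the two projection steps give
  \<open>w\<^sub>2 = w - P\<^sub>2 P\<^sub>1 w\<close>, so the forgetting is \<open>\<parallel>X\<^sub>1 P\<^sub>2 P\<^sub>1 w\<parallel>\<^sup>2 / 2\<close>; it vanishes for all
  admissible \<open>w\<close> iff \<open>X\<^sub>1 P\<^sub>2 P\<^sub>1 = 0\<close>. Writing \<open>P\<^sub>m = I - Q\<^sub>m\<close> with \<open>Q\<^sub>m\<close> the orthogonal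
  projection onto the row space \<open>U\<^sub>m\<close> of \<open>X\<^sub>m\<close>, and using \<open>ker X\<^sub>1 = U\<^sub>1\<^sup>\<bottom>\<close>, this says
  exactly that \<open>Q\<^sub>2\<close> maps \<open>U\<^sub>1\<close> into itself.

  If \<open>Q\<^sub>2 U\<^sub>1 \<subseteq> U\<^sub>1\<close>, then for the \<open>i\<close>-th pair of principal vectors \<open>(u\<^sub>i, v\<^sub>i)\<close> the vector
  \<open>Q\<^sub>2 u\<^sub>i\<close> lies in \<open>U\<^sub>1 \<inter> U\<^sub>2\<close> and is orthogonal to the earlier principal vectors, so by
  maximality \<open>cos \<theta>\<^sub>i\<close> is \<open>1\<close> unless it is \<open>0\<close>. Conversely, if the cosines are \<open>1\<close> up to some
  index \<open>k\<close> and \<open>0\<close> afterwards, then \<open>u\<^sub>0, \<dots>, u\<^sub>k\<^sub>-\<^sub>1\<close> span a subspace \<open>W \<subseteq> U\<^sub>1 \<inter> U\<^sub>2\<close> and the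
  parts of \<open>U\<^sub>1\<close> and \<open>U\<^sub>2\<close> orthogonal to \<open>W\<close> are orthogonal to each other, so \<open>Q\<^sub>2\<close> acts on
  \<open>U\<^sub>1\<close> as the projection onto \<open>W\<close>.\<close>

section \<open>Orthogonal projections\<close>

definition is_orth_proj :: "(real^'n) set \<Rightarrow> real^'n^'n \<Rightarrow> bool" where
  "is_orth_proj S P \<longleftrightarrow> (\<forall>x. P *v x \<in> S) \<and> (\<forall>x y. y \<in> S \<longrightarrow> (x - P *v x) \<bullet> y = 0)"

lemma is_orth_proj_exists:
  fixes S :: "(real^'n) set"
  assumes "subspace S"
  obtains P where "is_orth_proj S P"
proof -
  obtain B where "B \<subseteq> S" "pairwise orthogonal B" "span B = S"
    using orthogonal_basis_subspace[OF assms] by metis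
  define f where "f x = (\<Sum>b\<in>B. (b \<bullet> x / (b \<bullet> b)) *\<^sub>R b)" for x
  have "linear f"
    unfolding linear_iff f_def
    by (simp add: inner_add_right add_divide_distrib scaleR_add_left sum.distrib scaleR_sum_right)
  moreover have "f x \<in> S" for x
    unfolding f_def using \<open>B \<subseteq> S\<close> assms by (intro subspace_sum) (auto intro: subspace_mul)
  moreover have "(x - f x) \<bullet> y = 0" if "y \<in> S" for x y
    using Gram_Schmidt_step[OF \<open>pairwise orthogonal B\<close>, of y x] that \<open>span B = S\<close>
    by (simp add: f_def orthogonal_def inner_commute)
  moreover have "matrix f *v x = f x" for x
    using \<open>linear f\<close> by (simp add: matrix_works)
  ultimately show ?thesis
    using that[of "matrix f"] by (simp add: is_orth_proj_def)
qed

context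
  fixes S :: "(real^'n) set" and P :: "real^'n^'n"
  assumes S: "subspace S" and P: "is_orth_proj S P"
begin

lemma orth_proj_in: "P *v x \<in> S"
  using P by (simp add: is_orth_proj_def)

lemma orth_proj_orthogonal: "y \<in> S \<Longrightarrow> (x - P *v x) \<bullet> y = 0"
  using P by (simp add: is_orth_proj_def)

lemma orth_proj_fixes:
  assumes "x \<in> S" shows "P *v x = x"
proof -
  have "x - P *v x \<in> S"
    using assms orth_proj_in S by (simp add: subspace_diff)
  then show ?thesis
    using orth_proj_orthogonal by (metis eq_iff_diff_eq_0 inner_eq_zero_iff)
qed

lemma orth_proj_self_adjoint: "(P *v x) \<bullet> y = x \<bullet> (P *v y)"
proof -
  have "(P *v x) \<bullet> y = (P *v x) \<bullet> (P *v y)"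
    using orth_proj_orthogonal[OF orth_proj_in, of y x]
    by (simp add: inner_diff_left inner_diff_right inner_commute)
  also have "\<dots> = x \<bullet> (P *v y)"
    using orth_proj_orthogonal[OF orth_proj_in, of x y] by (simp add: inner_diff_left)
  finally show ?thesis .
qed

lemma orth_proj_symmetric: "transpose P = P"
proof -
  have "transpose P *v x = P *v x" for x
    by (rule vector_eq_rdot[THEN iffD1]) (simp add: dot_lmul_matrix orth_proj_self_adjoint)
  then show ?thesis
    by (simp add: matrix_eq)
qed

lemma orth_proj_eq_0:
  assumes "\<And>y. y \<in> S \<Longrightarrow> x \<bullet> y = 0" shows "P *v x = 0"
proof -
  have "(P *v x) \<bullet> (P *v x) = x \<bullet> (P *v x) - (x - P *v x) \<bullet> (P *v x)"
    by (simp add: inner_diff_left)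
  also have "\<dots> = 0"
    using assms orth_proj_orthogonal orth_proj_in by simp
  finally show ?thesis by simp
qed

lemma mem_iff_orthogonal_to_complement:
  "v \<in> S \<longleftrightarrow> (\<forall>a. (\<forall>y\<in>S. a \<bullet> y = 0) \<longrightarrow> a \<bullet> v = 0)"
proof
  assume "\<forall>a. (\<forall>y\<in>S. a \<bullet> y = 0) \<longrightarrow> a \<bullet> v = 0"
  then have "(v - P *v v) \<bullet> v = 0"
    using orth_proj_orthogonal by blast
  moreover have "(v - P *v v) \<bullet> (P *v v) = 0"
    using orth_proj_orthogonal orth_proj_in by blast
  ultimately have "(v - P *v v) \<bullet> (v - P *v v) = 0"
    by (simp add: inner_diff_right)
  then show "v \<in> S"
    using orth_proj_in by (metis eq_iff_diff_eq_0 inner_eq_zero_iff)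
qed simp

end

section \<open>Row spaces and the pseudoinverse\<close>

lemma subspace_rowspace: "subspace (rowspace X)"
  unfolding rowspace_def by (intro linear_subspace_image subspace_UNIV matrix_vector_mul_linear)

lemma rank_eq_dim_rowspace: "rank X = dim (rowspace X)"
  by (metis rank_transpose rank_dim_range rowspace_def)

lemma subspace_range_matrix_vector_mult: "subspace (range (\<lambda>x. (X::real^'d^'n) *v x))"
  by (intro linear_subspace_image subspace_UNIV matrix_vector_mul_linear)

lemma matrix_vector_mult_eq_0_iff_orthogonal_rowspace:
  fixes X :: "real^'d^'n"
  shows "X *v w = 0 \<longleftrightarrow> (\<forall>y\<in>rowspace X. w \<bullet> y = 0)"
proof
  assume "X *v w = 0"
  then show "\<forall>y\<in>rowspace X. w \<bullet> y = 0"
    by (auto simp: rowspace_def) (metis dot_lmul_matrix inner_commute inner_zero_right)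
next
  assume "\<forall>y\<in>rowspace X. w \<bullet> y = 0"
  then have "w \<bullet> (transpose X *v (X *v w)) = 0"
    by (auto simp: rowspace_def)
  then have "(X *v w) \<bullet> (X *v w) = 0"
    by (metis dot_lmul_matrix inner_commute transpose_matrix_vector)
  then show "X *v w = 0" by simp
qed

lemma inj_on_rowspace: "inj_on (\<lambda>x. (X::real^'d^'n) *v x) (rowspace X)"
proof (rule inj_onI)
  fix x y assume "x \<in> rowspace X" "y \<in> rowspace X" "X *v x = X *v y"
  then have "x - y \<in> rowspace X" "X *v (x - y) = 0"
    by (simp_all add: subspace_diff[OF subspace_rowspace] matrix_vector_mult_diff_distrib)
  then show "x = y"
    using matrix_vector_mult_eq_0_iff_orthogonal_rowspace
    by (metis eq_iff_diff_eq_0 inner_eq_zero_iff)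
qed

lemma mult_orth_proj_rowspace:
  assumes "is_orth_proj (rowspace X) Q"
  shows "X *v (Q *v v) = X *v v"
proof -
  have "X *v (v - Q *v v) = 0"
    using orth_proj_orthogonal[OF subspace_rowspace assms]
    by (simp add: matrix_vector_mult_eq_0_iff_orthogonal_rowspace)
  then show ?thesis by (simp add: matrix_vector_mult_diff_distrib)
qed

lemma penrose_inverse_unique:
  fixes A :: "real^'d^'n"
  assumes "A ** B ** A = A" "B ** A ** B = B"
      "transpose (A ** B) = A ** B" "transpose (B ** A) = B ** A"
    and "A ** C ** A = A" "C ** A ** C = C"
      "transpose (A ** C) = A ** C" "transpose (C ** A) = C ** A"
  shows "B = C"
proof -
  have "B = B ** (A ** B)" using assms(2) by (simp add: matrix_mul_assoc)
  also have "\<dots> = B ** transpose (A ** B)" using assms(3) by simp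
  also have "\<dots> = B ** transpose (A ** C ** A ** B)" using assms(5) by simp
  also have "\<dots> = B ** (transpose (A ** B) ** transpose (A ** C))"
    by (simp add: matrix_transpose_mul matrix_mul_assoc)
  also have "\<dots> = (B ** A ** B) ** A ** C" using assms(3,7) by (simp add: matrix_mul_assoc)
  also have "\<dots> = B ** A ** C" using assms(2) by simp
  finally have BAC: "B = B ** A ** C" .
  have "C = transpose (C ** A) ** C" using assms(6,8) by simp
  also have "\<dots> = transpose (C ** (A ** B ** A)) ** C" using assms(1) by simp
  also have "\<dots> = transpose (B ** A) ** transpose (C ** A) ** C"
    by (simp add: matrix_transpose_mul matrix_mul_assoc)
  also have "\<dots> = B ** A ** (C ** A ** C)" using assms(4,8) by (simp add: matrix_mul_assoc)
  also have "\<dots> = B ** A ** C" using assms(6) by simp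
  finally show ?thesis using BAC by simp
qed

lemma pinv_eqI:
  assumes "A ** B ** A = A" "B ** A ** B = B"
    "transpose (A ** B) = A ** B" "transpose (B ** A) = B ** A"
  shows "pinv A = B"
  unfolding pinv_def using assms penrose_inverse_unique[OF assms] by (intro the_equality) blast+

lemma exists_inverse_between_row_and_column_space:
  fixes X :: "real^'d^'n"
  assumes QR: "is_orth_proj (rowspace X) QR" and QC: "is_orth_proj (range (\<lambda>x. X *v x)) QC"
  obtains B where "B ** X = QR" "X ** B = QC" "\<forall>y. B *v y \<in> rowspace X"
proof -
  obtain g where g: "range g \<subseteq> rowspace X" "linear g" "\<forall>v\<in>rowspace X. g (X *v v) = v"
    using linear_exists_left_inverse_on[OF matrix_vector_mul_linear subspace_rowspace]
      inj_on_rowspace by blast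
  define B where "B = matrix (\<lambda>y. g (QC *v y))"
  have B: "B *v y = g (QC *v y)" for y
  proof -
    have "linear (\<lambda>y. g (QC *v y))"
      using linear_compose[OF matrix_vector_mul_linear g(2)] by (simp add: o_def)
    then show ?thesis unfolding B_def by (simp add: matrix_works)
  qed
  have "(B ** X) *v x = QR *v x" for x
  proof -
    have "QC *v (X *v x) = X *v x"
      by (rule orth_proj_fixes[OF subspace_range_matrix_vector_mult QC]) simp
    then have "(B ** X) *v x = g (X *v (QR *v x))"
      by (simp add: B mult_orth_proj_rowspace[OF QR] flip: matrix_vector_mul_assoc)
    also have "\<dots> = QR *v x"
      using g(3) orth_proj_in[OF subspace_rowspace QR] by blast
    finally show ?thesis .
  qed
  moreover have "(X ** B) *v y = QC *v y" for y
  proof -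
    obtain z where z: "QC *v y = X *v z"
      using orth_proj_in[OF subspace_range_matrix_vector_mult QC] by blast
    have "(X ** B) *v y = X *v g (X *v (QR *v z))"
      by (simp add: B z mult_orth_proj_rowspace[OF QR] flip: matrix_vector_mul_assoc)
    also have "\<dots> = X *v (QR *v z)"
      using g(3) orth_proj_in[OF subspace_rowspace QR] by metis
    also have "\<dots> = QC *v y"
      by (simp add: z mult_orth_proj_rowspace[OF QR])
    finally show ?thesis .
  qed
  moreover have "B *v y \<in> rowspace X" for y
    using g(1) by (auto simp: B)
  ultimately show ?thesis
    using that[of B] by (simp add: matrix_eq)
qed

lemma pinv_mult_is_orth_proj: "is_orth_proj (rowspace X) (pinv X ** X)"
proof -
  obtain QR where QR: "is_orth_proj (rowspace X) QR"
    using is_orth_proj_exists[OF subspace_rowspace] .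
  obtain QC where QC: "is_orth_proj (range (\<lambda>x. X *v x)) QC"
    using is_orth_proj_exists[OF subspace_range_matrix_vector_mult] .
  obtain B where BX: "B ** X = QR" and XB: "X ** B = QC" and B: "\<forall>y. B *v y \<in> rowspace X"
    using exists_inverse_between_row_and_column_space[OF QR QC] .
  have "pinv X = B"
  proof (rule pinv_eqI)
    have "QC *v (X *v x) = X *v x" for x
      by (rule orth_proj_fixes[OF subspace_range_matrix_vector_mult QC]) simp
    then show "X ** B ** X = X"
      by (simp add: XB matrix_eq flip: matrix_vector_mul_assoc)
    have "QR *v (B *v y) = B *v y" for y
      using B by (intro orth_proj_fixes[OF subspace_rowspace QR]) simp
    then show "B ** X ** B = B"
      by (simp add: BX matrix_eq flip: matrix_vector_mul_assoc)
    show "transpose (X ** B) = X ** B"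
      using orth_proj_symmetric[OF subspace_range_matrix_vector_mult QC] XB by simp
    show "transpose (B ** X) = B ** X"
      using orth_proj_symmetric[OF subspace_rowspace QR] BX by simp
  qed
  then show ?thesis using BX QR by simp
qed

lemma kerproj_mult: "kerproj X *v w = w - (pinv X ** X) *v w"
  by (simp add: kerproj_def matrix_vector_mult_diff_rdistrib)

lemma mult_kerproj: "X *v (kerproj X *v w) = 0"
  by (simp add: kerproj_mult matrix_vector_mult_diff_distrib
      mult_orth_proj_rowspace[OF pinv_mult_is_orth_proj])

lemma kerproj_product_eq_0_iff_invariant:
  fixes X1 :: "real^'d^'n1" and X2 :: "real^'d^'n2"
  shows "X1 ** kerproj X2 ** kerproj X1 = 0 \<longleftrightarrow>
     (\<forall>x\<in>rowspace X1. (pinv X2 ** X2) *v x \<in> rowspace X1)"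
proof -
  let ?U = "rowspace X1" and ?Q2 = "pinv X2 ** X2"
  let ?perp = "\<lambda>a. \<forall>y\<in>?U. a \<bullet> y = 0"
  note Q1 = pinv_mult_is_orth_proj[of X1] and Q2 = pinv_mult_is_orth_proj[of X2]
  have kerproj_perp: "?perp (kerproj X1 *v z)" for z
    using orth_proj_orthogonal[OF subspace_rowspace Q1] by (simp add: kerproj_mult)
  have kerproj_fixes_perp: "kerproj X1 *v a = a" if "?perp a" for a
    using orth_proj_eq_0[OF subspace_rowspace Q1] that by (simp add: kerproj_mult)
  have "X1 ** kerproj X2 ** kerproj X1 = 0 \<longleftrightarrow> (\<forall>z. X1 *v (kerproj X2 *v (kerproj X1 *v z)) = 0)"
    by (simp add: matrix_eq flip: matrix_vector_mul_assoc)
  also have "\<dots> \<longleftrightarrow> (\<forall>a. ?perp a \<longrightarrow> X1 *v (kerproj X2 *v a) = 0)"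
    using kerproj_perp kerproj_fixes_perp by metis
  also have "\<dots> \<longleftrightarrow> (\<forall>a. ?perp a \<longrightarrow> (\<forall>x\<in>?U. a \<bullet> (?Q2 *v x) = 0))"
    by (auto simp: matrix_vector_mult_eq_0_iff_orthogonal_rowspace kerproj_mult inner_diff_left
        orth_proj_self_adjoint[OF subspace_rowspace Q2])
  also have "\<dots> \<longleftrightarrow> (\<forall>x\<in>?U. ?Q2 *v x \<in> ?U)"
    using mem_iff_orthogonal_to_complement[OF subspace_rowspace Q1] by blast
  finally show ?thesis .
qed

section \<open>Forgetting after two tasks\<close>

lemma iter2_consistent:
  fixes X1 :: "real^'d^'n1" and X2 :: "real^'d^'n2"
  shows "iter2 X1 (X1 *v w) X2 (X2 *v w) = w - (kerproj X2 ** kerproj X1) *v w"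
  by (simp add: iter2_def cl_step_def kerproj_mult matrix_vector_mult_diff_distrib algebra_simps
      flip: matrix_vector_mul_assoc)

lemma forgetting2_consistent:
  fixes X1 :: "real^'d^'n1" and X2 :: "real^'d^'n2"
  shows "forgetting2 X1 (X1 *v w) X2 (X2 *v w) =
    (norm ((X1 ** kerproj X2 ** kerproj X1) *v w))\<^sup>2 / 2"
proof -
  have "X1 *v iter2 X1 (X1 *v w) X2 (X2 *v w) - X1 *v w = - ((X1 ** kerproj X2 ** kerproj X1) *v w)"
    by (simp add: iter2_consistent matrix_vector_mult_diff_distrib flip: matrix_vector_mul_assoc)
  moreover have "X2 *v iter2 X1 (X1 *v w) X2 (X2 *v w) - X2 *v w = 0"
    by (simp add: iter2_consistent matrix_vector_mult_diff_distrib mult_kerproj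
        flip: matrix_vector_mul_assoc)
  ultimately show ?thesis
    by (simp add: forgetting2_def Let_def)
qed

lemma forgetting2_vanishes_iff:
  fixes X1 :: "real^'d^'n1" and X2 :: "real^'d^'n2"
  assumes "specnorm X1 \<le> 1" and "specnorm X2 \<le> 1"
  shows "(\<forall>y1 y2. in_S2 X1 y1 X2 y2 \<longrightarrow> forgetting2 X1 y1 X2 y2 = 0)
          \<longleftrightarrow> X1 ** kerproj X2 ** kerproj X1 = 0"
proof
  assume vanish: "\<forall>y1 y2. in_S2 X1 y1 X2 y2 \<longrightarrow> forgetting2 X1 y1 X2 y2 = 0"
  have "(X1 ** kerproj X2 ** kerproj X1) *v z = 0" for z
  proof -
    define c where "c = norm z + 1"
    have "c > 0" "norm (z /\<^sub>R c) \<le> 1"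
      by (simp_all add: c_def add_nonneg_pos divide_simps)
    then have "in_S2 X1 (X1 *v (z /\<^sub>R c)) X2 (X2 *v (z /\<^sub>R c))"
      using assms unfolding in_S2_def by blast
    then have "forgetting2 X1 (X1 *v (z /\<^sub>R c)) X2 (X2 *v (z /\<^sub>R c)) = 0"
      using vanish by blast
    then have "(X1 ** kerproj X2 ** kerproj X1) *v (z /\<^sub>R c) = 0"
      unfolding forgetting2_consistent by simp
    with \<open>c > 0\<close> show ?thesis
      by (simp add: matrix_vector_mult_scaleR)
  qed
  then show "X1 ** kerproj X2 ** kerproj X1 = 0"
    by (simp add: matrix_eq)
next
  assume "X1 ** kerproj X2 ** kerproj X1 = 0"
  then show "\<forall>y1 y2. in_S2 X1 y1 X2 y2 \<longrightarrow> forgetting2 X1 y1 X2 y2 = 0"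
    unfolding in_S2_def by (auto simp: forgetting2_consistent)
qed

section \<open>Principal vectors\<close>

lemma exists_unit_orthogonal_to_family:
  fixes U :: "(real^'d) set" and w :: "nat \<Rightarrow> real^'d"
  assumes U: "subspace U" and w: "\<forall>j<k. w j \<in> U" and "k < dim U"
  obtains x where "x \<in> U" "norm x = 1" "\<forall>j<k. x \<bullet> w j = 0"
proof -
  let ?W = "span (w ` {..<k})"
  obtain P where P: "is_orth_proj ?W P"
    using is_orth_proj_exists[OF subspace_span] .
  have WU: "?W \<subseteq> U"
    using span_minimal[of "w ` {..<k}" U] w U by auto
  have "dim ?W < dim U"
    using dim_le_card[of ?W "w ` {..<k}"] card_image_le[of "{..<k}" w] \<open>k < dim U\<close> by simp
  then obtain z where "z \<in> U" "z \<notin> ?W"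
    using dim_subset[of U ?W] by (meson not_le subsetI)
  define x0 where "x0 = z - P *v z"
  have "x0 \<noteq> 0"
    unfolding x0_def using \<open>z \<notin> ?W\<close> orth_proj_in[OF subspace_span P] by (metis eq_iff_diff_eq_0)
  moreover have "x0 \<in> U"
    unfolding x0_def using \<open>z \<in> U\<close> orth_proj_in[OF subspace_span P] WU U
    by (meson subsetD subspace_diff)
  moreover have "x0 \<bullet> w j = 0" if "j < k" for j
    unfolding x0_def using that
    by (intro orth_proj_orthogonal[OF subspace_span P]) (auto intro: span_base)
  ultimately show ?thesis
    using that[of "x0 /\<^sub>R norm x0"] U by (simp add: subspace_scale)
qed

lemma principal_vectors_Suc:
  "principal_vectors U V (Suc k) u v \<longleftrightarrow> principal_vectors U V k u v \<and>
     u k \<in> U \<and> v k \<in> V \<and> norm (u k) = 1 \<and> norm (v k) = 1 \<and>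
     (\<forall>j<k. u k \<bullet> u j = 0 \<and> v k \<bullet> v j = 0) \<and>
     (\<forall>x y. x \<in> U \<and> y \<in> V \<and> norm x = 1 \<and> norm y = 1 \<and>
            (\<forall>j<k. x \<bullet> u j = 0 \<and> y \<bullet> v j = 0) \<longrightarrow> \<bar>x \<bullet> y\<bar> \<le> \<bar>u k \<bullet> v k\<bar>)"
  unfolding principal_vectors_def by (auto simp: less_Suc_eq)

lemma principal_vectors_fun_upd:
  "principal_vectors U V k (u(k := x)) (v(k := y)) \<longleftrightarrow> principal_vectors U V k u v"
  unfolding principal_vectors_def by simp

lemma compact_orthogonal_unit_pairs:
  fixes U V :: "(real^'d) set"
  assumes "subspace U" "subspace V"
  shows "compact {p. fst p \<in> U \<and> snd p \<in> V \<and> norm (fst p) = 1 \<and> norm (snd p) = 1 \<and>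
                     (\<forall>j<k. fst p \<bullet> u j = 0 \<and> snd p \<bullet> v j = 0)}"
proof -
  have "closed {p :: (real^'d) \<times> (real^'d). \<forall>j. j < k \<longrightarrow> fst p \<bullet> u j = 0 \<and> snd p \<bullet> v j = 0}"
    by (intro closed_Collect_all closed_Collect_imp closed_Collect_conj closed_Collect_eq
        continuous_intros) auto
  moreover have "closed (U \<times> V)"
    using assms by (intro closed_Times closed_subspace)
  ultimately have "compact ((sphere 0 1 \<times> sphere 0 1) \<inter> ((U \<times> V) \<inter>
      {p. \<forall>j. j < k \<longrightarrow> fst p \<bullet> u j = 0 \<and> snd p \<bullet> v j = 0}))"
    by (intro compact_Int_closed compact_Times compact_sphere closed_Int)
  also have "\<dots> = {p. fst p \<in> U \<and> snd p \<in> V \<and> norm (fst p) = 1 \<and> norm (snd p) = 1 \<and>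
                     (\<forall>j<k. fst p \<bullet> u j = 0 \<and> snd p \<bullet> v j = 0)}"
    by auto
  finally show ?thesis .
qed

lemma principal_vectors_extend:
  fixes U V :: "(real^'d) set"
  assumes U: "subspace U" and V: "subspace V"
    and pv: "principal_vectors U V k u v" and "k < dim U" "k < dim V"
  obtains x y where "principal_vectors U V (Suc k) (u(k := x)) (v(k := y))"
proof -
  let ?F = "{p. fst p \<in> U \<and> snd p \<in> V \<and> norm (fst p) = 1 \<and> norm (snd p) = 1 \<and>
                (\<forall>j<k. fst p \<bullet> u j = 0 \<and> snd p \<bullet> v j = 0)}"
  have uU: "\<forall>j<k. u j \<in> U" and vV: "\<forall>j<k. v j \<in> V"
    using pv by (simp_all add: principal_vectors_def)
  obtain x where "x \<in> U" "norm x = 1" "\<forall>j<k. x \<bullet> u j = 0"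
    using exists_unit_orthogonal_to_family[OF U uU \<open>k < dim U\<close>] .
  moreover obtain y where "y \<in> V" "norm y = 1" "\<forall>j<k. y \<bullet> v j = 0"
    using exists_unit_orthogonal_to_family[OF V vV \<open>k < dim V\<close>] .
  ultimately have "(x, y) \<in> ?F" by simp
  then have "?F \<noteq> {}" by blast
  moreover have "continuous_on ?F (\<lambda>p. \<bar>fst p \<bullet> snd p\<bar>)"
    by (intro continuous_intros)
  ultimately obtain p where "p \<in> ?F" and "\<forall>q\<in>?F. \<bar>fst q \<bullet> snd q\<bar> \<le> \<bar>fst p \<bullet> snd p\<bar>"
    using continuous_attains_sup[OF compact_orthogonal_unit_pairs[OF U V]] by blast
  then show ?thesis
    using that[of "fst p" "snd p"] pv by (simp add: principal_vectors_Suc principal_vectors_fun_upd)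
qed

lemma principal_vectors_exists:
  fixes U V :: "(real^'d) set"
  assumes "subspace U" "subspace V" "r \<le> dim U" "r \<le> dim V"
  shows "\<exists>u v. principal_vectors U V r u v"
  using assms(3,4)
proof (induction r)
  case 0
  then show ?case by (simp add: principal_vectors_def)
next
  case (Suc k)
  then obtain u v where "principal_vectors U V k u v" by auto
  then show ?case
    using principal_vectors_extend[OF assms(1,2)] Suc.prems by (metis Suc_le_eq)
qed

lemma orthonormal_family_lt_dim:
  fixes U :: "(real^'d) set" and w :: "nat \<Rightarrow> real^'d"
  assumes U: "subspace U" and x: "x \<in> U" "x \<noteq> 0" "\<forall>j<n. x \<bullet> w j = 0"
    and w: "\<forall>j<n. w j \<in> U \<and> norm (w j) = 1" "\<forall>i<n. \<forall>j<n. i \<noteq> j \<longrightarrow> w i \<bullet> w j = 0"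
  shows "n < dim U"
proof -
  let ?S = "insert x (w ` {..<n})"
  have "inj_on w {..<n}"
    using w by (intro inj_onI) (metis lessThan_iff norm_eq_1 zero_neq_one)
  moreover have "x \<notin> w ` {..<n}"
    using x w by (auto simp: norm_eq_1)
  ultimately have "card ?S = Suc n"
    by (simp add: card_image)
  moreover have "independent ?S"
    using x w by (intro pairwise_orthogonal_independent)
      (auto simp: pairwise_def orthogonal_def inner_commute)
  then have "card ?S \<le> dim U"
    using x w by (intro independent_card_le_dim) auto
  ultimately show ?thesis by simp
qed

locale principal_pairs =
  fixes U V :: "(real^'d) set" and Q :: "real^'d^'d" and r :: nat and u v :: "nat \<Rightarrow> real^'d"
  assumes U: "subspace U" and V: "subspace V" and Q: "is_orth_proj V Q"
    and pv: "principal_vectors U V r u v" and r: "r = min (dim U) (dim V)"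
begin

abbreviation \<sigma> :: "nat \<Rightarrow> real" where "\<sigma> i \<equiv> \<bar>u i \<bullet> v i\<bar>"

lemma principal_vector_props:
  assumes "i < r"
  shows "u i \<in> U" "v i \<in> V" "norm (u i) = 1" "norm (v i) = 1"
    "\<forall>j<i. u i \<bullet> u j = 0 \<and> v i \<bullet> v j = 0"
  using pv assms unfolding principal_vectors_def by blast+

lemma principal_vector_max:
  assumes "i < r" "x \<in> U" "y \<in> V" "norm x = 1" "norm y = 1" "\<forall>j<i. x \<bullet> u j = 0 \<and> y \<bullet> v j = 0"
  shows "\<bar>x \<bullet> y\<bar> \<le> \<sigma> i"
  using pv assms unfolding principal_vectors_def by blast

lemma inner_le_sigma:
  assumes "i < r" "x \<in> U" "y \<in> V" "\<forall>j<i. x \<bullet> u j = 0 \<and> y \<bullet> v j = 0"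
  shows "\<bar>x \<bullet> y\<bar> \<le> \<sigma> i * (norm x * norm y)"
proof (cases "x = 0 \<or> y = 0")
  case False
  have "\<bar>(x /\<^sub>R norm x) \<bullet> (y /\<^sub>R norm y)\<bar> \<le> \<sigma> i"
    using assms False U V by (intro principal_vector_max) (auto simp: subspace_scale)
  with False show ?thesis
    by (simp add: abs_mult field_simps)
qed auto

lemma sigma_le_1: "i < r \<Longrightarrow> \<sigma> i \<le> 1"
  using Cauchy_Schwarz_ineq2[of "u i" "v i"] principal_vector_props by simp

lemma sigma_antimono:
  assumes "j \<le> i" "i < r" shows "\<sigma> i \<le> \<sigma> j"
proof (cases "j = i")
  case False
  then have "\<forall>l<j. u i \<bullet> u l = 0 \<and> v i \<bullet> v l = 0"
    using principal_vector_props(5)[OF assms(2)] assms(1) by simp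
  then show ?thesis
    using inner_le_sigma[of j "u i" "v i"] principal_vector_props[OF assms(2)] assms by simp
qed simp

lemma v_eq_pm_u: "i < r \<Longrightarrow> \<sigma> i = 1 \<Longrightarrow> v i = u i \<or> v i = - u i"
  using norm_cauchy_schwarz_abs_eq[of "u i" "v i"] principal_vector_props[of i] by simp

lemma u_mem_V: "i < r \<Longrightarrow> \<sigma> i = 1 \<Longrightarrow> u i \<in> V"
  using v_eq_pm_u principal_vector_props(2) V by (metis minus_minus subspace_neg)

lemma orthogonal_v_if_sigma_1:
  assumes "j < r" "\<sigma> j = 1" "y \<bullet> u j = 0" shows "y \<bullet> v j = 0"
  using v_eq_pm_u[OF assms(1,2)] assms(3) by auto

lemma u_orthogonal: "i < r \<Longrightarrow> j < r \<Longrightarrow> i \<noteq> j \<Longrightarrow> u i \<bullet> u j = 0"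
  using principal_vector_props(5) by (metis inner_commute linorder_neqE_nat)

lemma sigma_eq_1_if_common_vector:
  assumes "i < r" "q \<in> U" "q \<in> V" "q \<noteq> 0" "\<forall>j<i. \<sigma> j = 1 \<and> q \<bullet> u j = 0"
  shows "\<sigma> i = 1"
proof -
  have "\<forall>j<i. q \<bullet> u j = 0 \<and> q \<bullet> v j = 0"
  proof (intro allI impI conjI)
    fix j assume "j < i"
    then show "q \<bullet> u j = 0" and "q \<bullet> v j = 0"
      using assms(1,5) orthogonal_v_if_sigma_1[of j q] by auto
  qed
  then have "norm q * norm q \<le> \<sigma> i * (norm q * norm q)"
    using inner_le_sigma[OF assms(1-3)]
    by (simp add: power2_norm_eq_inner[symmetric] power2_eq_square)
  then have "1 \<le> \<sigma> i"
    using \<open>q \<noteq> 0\<close> by simp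
  then show ?thesis
    using sigma_le_1[OF \<open>i < r\<close>] by simp
qed

lemma sigma_eq_1_if_invariant:
  assumes invariant: "\<forall>x\<in>U. Q *v x \<in> U"
    and "i < r" "\<forall>j<i. \<sigma> j = 1" "\<sigma> i \<noteq> 0"
  shows "\<sigma> i = 1"
proof -
  let ?q = "Q *v u i"
  have "u i \<bullet> v i = u i \<bullet> (Q *v v i)"
    using orth_proj_fixes[OF V Q principal_vector_props(2)[OF \<open>i < r\<close>]] by simp
  also have "\<dots> = ?q \<bullet> v i"
    by (simp add: orth_proj_self_adjoint[OF V Q])
  finally have "?q \<noteq> 0"
    using \<open>\<sigma> i \<noteq> 0\<close> by auto
  moreover have "?q \<in> U"
    using invariant principal_vector_props(1)[OF \<open>i < r\<close>] by blast
  moreover have "?q \<bullet> u j = 0" if "j < i" for j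
  proof -
    have "?q \<bullet> u j = u i \<bullet> (Q *v u j)"
      by (rule orth_proj_self_adjoint[OF V Q])
    also have "\<dots> = u i \<bullet> u j"
      using orth_proj_fixes[OF V Q] u_mem_V assms(3) that \<open>i < r\<close> by simp
    also have "\<dots> = 0"
      using principal_vector_props(5)[OF \<open>i < r\<close>] that by blast
    finally show ?thesis .
  qed
  ultimately show ?thesis
    using sigma_eq_1_if_common_vector[OF \<open>i < r\<close> _ orth_proj_in[OF V Q]] assms(3) by blast
qed

lemma sigma_0_or_1_if_invariant:
  assumes invariant: "\<forall>x\<in>U. Q *v x \<in> U"
  shows "\<forall>i<r. \<sigma> i = 0 \<or> \<sigma> i = 1"
proof -
  have "i < r \<longrightarrow> \<sigma> i = 0 \<or> \<sigma> i = 1" for i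
  proof (induction i rule: less_induct)
    case (less i)
    show ?case
    proof
      assume "i < r"
      have "\<forall>j<i. \<sigma> j = 0 \<or> \<sigma> j = 1"
        using less.IH \<open>i < r\<close> by simp
      then consider (zero) j where "j < i" "\<sigma> j = 0" | (ones) "\<forall>j<i. \<sigma> j = 1"
        by blast
      then show "\<sigma> i = 0 \<or> \<sigma> i = 1"
      proof cases
        case zero
        then show ?thesis
          using sigma_antimono[of j i] \<open>i < r\<close> by simp
      next
        case ones
        then show ?thesis
          using sigma_eq_1_if_invariant[OF invariant \<open>i < r\<close>] by blast
      qed
    qed
  qed
  then show ?thesis by blast
qed

lemma orthogonal_past_unit_cosines:
  assumes k: "k \<le> r" "\<forall>j<k. \<sigma> j = 1" "k < r \<Longrightarrow> \<sigma> k = 0"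
    and x: "x \<in> U" "\<forall>j<k. x \<bullet> u j = 0" and y: "y \<in> V" "\<forall>j<k. y \<bullet> u j = 0"
  shows "x \<bullet> y = 0"
proof (cases "k < r")
  case True
  have "\<forall>j<k. x \<bullet> u j = 0 \<and> y \<bullet> v j = 0"
  proof (intro allI impI conjI)
    fix j assume "j < k"
    then show "x \<bullet> u j = 0" "y \<bullet> v j = 0"
      using orthogonal_v_if_sigma_1[of j y] k(2) x(2) y(2) True by auto
  qed
  then show ?thesis
    using inner_le_sigma[OF True x(1) y(1)] k(3)[OF True] by simp
next
  case False
  then have "k = r" using k(1) by simp
  show ?thesis
  proof (rule ccontr)
    assume "x \<bullet> y \<noteq> 0"
    then have "x \<noteq> 0" "y \<noteq> 0" by auto
    have u: "\<forall>j<r. u j \<in> U \<and> norm (u j) = 1" "\<forall>j<r. u j \<in> V \<and> norm (u j) = 1"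
      using principal_vector_props(1,3) u_mem_V k(2) unfolding \<open>k = r\<close> by blast+
    have "r < dim U"
      using orthonormal_family_lt_dim[OF U x(1) \<open>x \<noteq> 0\<close> _ u(1)] x(2) u_orthogonal \<open>k = r\<close> by blast
    moreover have "r < dim V"
      using orthonormal_family_lt_dim[OF V y(1) \<open>y \<noteq> 0\<close> _ u(2)] y(2) u_orthogonal \<open>k = r\<close> by blast
    ultimately show False using r by simp
  qed
qed

lemma unit_cosines_then_zero:
  assumes sigma: "\<forall>i<r. \<sigma> i = 0 \<or> \<sigma> i = 1"
  obtains k where "k \<le> r" "\<forall>j<k. \<sigma> j = 1" "k < r \<Longrightarrow> \<sigma> k = 0"
proof (cases "\<exists>i<r. \<sigma> i = 0")
  case True
  then obtain k where "k < r" "\<sigma> k = 0" "\<forall>j<k. \<not> (j < r \<and> \<sigma> j = 0)"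
    using exists_least_iff[of "\<lambda>i. i < r \<and> \<sigma> i = 0"] by blast
  moreover have "\<sigma> j = 1" if "j < k" for j
  proof -
    have "j < r" "\<sigma> j \<noteq> 0"
      using that \<open>k < r\<close> \<open>\<forall>j<k. \<not> (j < r \<and> \<sigma> j = 0)\<close> by auto
    then show ?thesis using sigma by blast
  qed
  ultimately show ?thesis
    using that[of k] by simp
next
  case False
  then show ?thesis
    using that[of r] sigma by auto
qed

lemma invariant_if_sigma_0_or_1:
  assumes sigma: "\<forall>i<r. \<sigma> i = 0 \<or> \<sigma> i = 1"
  shows "\<forall>x\<in>U. Q *v x \<in> U"
proof -
  obtain k where k: "k \<le> r" "\<forall>j<k. \<sigma> j = 1" "k < r \<Longrightarrow> \<sigma> k = 0"
    using unit_cosines_then_zero[OF sigma] by blast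
  let ?W = "span (u ` {..<k})"
  obtain PW where PW: "is_orth_proj ?W PW"
    using is_orth_proj_exists[OF subspace_span] .
  have "u ` {..<k} \<subseteq> U" "u ` {..<k} \<subseteq> V"
    using principal_vector_props(1) u_mem_V k by auto
  then have WU: "?W \<subseteq> U" and WV: "?W \<subseteq> V"
    using span_minimal U V by blast+
  have orth_W: "(z - PW *v z) \<bullet> u j = 0" if "j < k" for z j
    using that by (intro orth_proj_orthogonal[OF subspace_span PW]) (auto intro: span_base)
  have "Q *v x = PW *v x" if x: "x \<in> U" for x
  proof -
    let ?x' = "x - PW *v x"
    have "?x' \<in> U"
      using x orth_proj_in[OF subspace_span PW] WU U by (meson subsetD subspace_diff)
    have "?x' \<bullet> y = 0" if y: "y \<in> V" for y
    proof -
      have "y - PW *v y \<in> V"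
        using y orth_proj_in[OF subspace_span PW] WV V by (meson subsetD subspace_diff)
      then have "?x' \<bullet> (y - PW *v y) = 0"
        using orthogonal_past_unit_cosines[OF k \<open>?x' \<in> U\<close>] orth_W by blast
      moreover have "?x' \<bullet> (PW *v y) = 0"
        using orth_proj_orthogonal[OF subspace_span PW orth_proj_in[OF subspace_span PW]] .
      ultimately show ?thesis by (simp add: inner_diff_right)
    qed
    then have "Q *v ?x' = 0"
      using orth_proj_eq_0[OF V Q] by blast
    moreover have "Q *v (PW *v x) = PW *v x"
      using orth_proj_fixes[OF V Q] orth_proj_in[OF subspace_span PW] WV by blast
    ultimately show ?thesis
      by (simp add: matrix_vector_mult_diff_distrib)
  qed
  then show ?thesis
    using orth_proj_in[OF subspace_span PW] WU by auto
qed

lemma sigma_0_or_1_iff_invariant: "(\<forall>i<r. \<sigma> i = 0 \<or> \<sigma> i = 1) \<longleftrightarrow> (\<forall>x\<in>U. Q *v x \<in> U)"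
  using sigma_0_or_1_if_invariant invariant_if_sigma_0_or_1 by blast

end

section \<open>Principal angles of the two row spaces\<close>

lemma principal_angles_eq:
  fixes X1 :: "real^'d^'n1" and X2 :: "real^'d^'n2"
  obtains u v where
    "principal_vectors (rowspace X1) (rowspace X2) (min (rank X1) (rank X2)) u v"
    "principal_angles X1 X2 = map (\<lambda>i. arccos \<bar>u i \<bullet> v i\<bar>) [0..<min (rank X1) (rank X2)]"
proof -
  let ?pv = "\<lambda>uv. principal_vectors (rowspace X1) (rowspace X2) (min (rank X1) (rank X2))
                 (fst uv) (snd uv)"
  have "\<exists>u v. principal_vectors (rowspace X1) (rowspace X2) (min (rank X1) (rank X2)) u v"
    by (rule principal_vectors_exists) (simp_all add: subspace_rowspace rank_eq_dim_rowspace)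
  then have "\<exists>uv. ?pv uv"
    by simp
  then have "?pv (SOME uv. ?pv uv)"
    by (rule someI_ex)
  then show ?thesis
    using that by (simp add: principal_angles_def Let_def)
qed

lemma arccos_eq_0_or_pi_half_iff:
  assumes "\<bar>t\<bar> \<le> 1"
  shows "(arccos t = 0 \<or> arccos t = pi / 2) \<longleftrightarrow> (t = 1 \<or> t = 0)"
  using arccos_eq_iff[of t 1] arccos_eq_iff[of t 0] assms by auto

theorem mainTheorem1:
  fixes X1 :: "real^'d^'n1" and X2 :: "real^'d^'n2"
  assumes "specnorm X1 \<le> 1" and "specnorm X2 \<le> 1"
    and "rank X1 < CARD('d)" and "rank X2 < CARD('d)"
  shows "((\<forall>y1 y2. in_S2 X1 y1 X2 y2 \<longrightarrow> forgetting2 X1 y1 X2 y2 = 0)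
          \<longleftrightarrow> X1 ** kerproj X2 ** kerproj X1 = 0)
       \<and> (X1 ** kerproj X2 ** kerproj X1 = 0
          \<longleftrightarrow> (\<forall>\<theta>\<in>set (principal_angles X1 X2). \<theta> = 0 \<or> \<theta> = pi / 2))"
proof
  show "(\<forall>y1 y2. in_S2 X1 y1 X2 y2 \<longrightarrow> forgetting2 X1 y1 X2 y2 = 0)
          \<longleftrightarrow> X1 ** kerproj X2 ** kerproj X1 = 0"
    using forgetting2_vanishes_iff[OF assms(1,2)] .
  let ?r = "min (rank X1) (rank X2)"
  obtain u v where pv: "principal_vectors (rowspace X1) (rowspace X2) ?r u v"
    and angles: "principal_angles X1 X2 = map (\<lambda>i. arccos \<bar>u i \<bullet> v i\<bar>) [0..<?r]"
    using principal_angles_eq .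
  interpret principal_pairs "rowspace X1" "rowspace X2" "pinv X2 ** X2" ?r u v
    using pv by unfold_locales
      (simp_all add: subspace_rowspace pinv_mult_is_orth_proj rank_eq_dim_rowspace)
  have "(\<forall>\<theta>\<in>set (principal_angles X1 X2). \<theta> = 0 \<or> \<theta> = pi / 2) \<longleftrightarrow> (\<forall>i<?r. \<sigma> i = 0 \<or> \<sigma> i = 1)"
    using arccos_eq_0_or_pi_half_iff sigma_le_1 by (auto simp: angles)
  also have "\<dots> \<longleftrightarrow> (\<forall>x\<in>rowspace X1. (pinv X2 ** X2) *v x \<in> rowspace X1)"
    by (rule sigma_0_or_1_iff_invariant)
  also have "\<dots> \<longleftrightarrow> X1 ** kerproj X2 ** kerproj X1 = 0"
    by (rule kerproj_product_eq_0_iff_invariant[symmetric])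
  finally show "X1 ** kerproj X2 ** kerproj X1 = 0
          \<longleftrightarrow> (\<forall>\<theta>\<in>set (principal_angles X1 X2). \<theta> = 0 \<or> \<theta> = pi / 2)"
    by blast
qed

end
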